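(* Let $\mathcal{T}$ be a conforming simplicial mesh of a domain in $\mathbb{R}^d$ with nodes $\{\mathbf{x}_i\}$, let $F$ be a common facet of two cells $T_o$ and $T_n$, and let $\mathbf{x}^* \in F$. For a point $\mathbf{x}$ in the closure of a cell $T$, let $\mathcal{N}^1(\mathbf{x})$ be the set of 1-ring neighbours of $T$, and let $\mathcal{N}^1_o$, $\mathcal{N}^1_n$ denote these sets for $T_o$, $T_n$; put $\mathcal{N}^1_c=\mathcal{N}^1_o\cap\mathcal{N}^1_n$, $\mathcal{N}^1_r=\mathcal{N}^1_o\setminus\mathcal{N}^1_c$ (removed nodes), $\mathcal{N}^1_a=\mathcal{N}^1_n\setminus\mathcal{N}^1_c$ (added nodes). Let $d:\mathbb{R}^d\to[0,\infty)$ be a smooth compactly supported sample-weighting function and, for each node $i$, let $\eta_i$ be a diminishing function, so that the modified sample weight of node $i\in\mathcal{N}^1(\mathbf{x})$ at $\mathbf{x}$ is $d'_i(\mathbf{x})=\eta_i(\mathbf{x})\,d(\mathbf{x}_i-\mathbf{x})$. With $\mathbf{p}(\mathbf{y})=[1,\mathbf{y}^T]^T$ and fixed nodal values $u_i\in\mathbb{R}$, define $$\mathbf{M}(\mathbf{x})=\sum_{i\in\mathcal{N}^1(\mathbf{x})} d'_i(\mathbf{x})\,\mathbf{p}(\mathbf{x}_i-\mathbf{x})\mathbf{p}(\mathbf{x}_i-\mathbf{x})^T,\qquad \mathbf{b}(\mathbf{x})=\sum_{i\in\mathcal{N}^1(\mathbf{x})} d'_i(\mathbf{x})\,u_i\,\mathbf{p}(\mathbf{x}_i-\mathbf{x}),$$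 and the MLS reconstruction of the value and gradient $\begin{bmatrix}\hat u(\mathbf{x})\\ \nabla\hat u(\mathbf{x})\end{bmatrix}=\mathbf{M}(\mathbf{x})^{-1}\mathbf{b}(\mathbf{x})$. Assume: (i) for every $i\in\mathcal{N}^1_c$, $\mathbf{x}\mapsto \eta_i(\mathbf{x})d(\mathbf{x}_i-\mathbf{x})$ is smooth (in particular continuous) on a neighbourhood of $\mathbf{x}^*$ in $T_o\cup T_n$; (ii) $\eta$ is locally diminishing: there is $K>0$ such that $|\eta_i(\mathbf{x})|\le K\,\|\mathbf{x}-\mathbf{x}^*\|$ for $i\in\mathcal{N}^1_r$, $\mathbf{x}\in T_o$ and for $i\in\mathcal{N}^1_a$, $\mathbf{x}\in T_n$, near $\mathbf{x}^*$; (iii) the nodes are non-degenerate near $\mathbf{x}^*$, i.e. the minimum singular value of $\mathbf{M}(\mathbf{x})$ is bounded away from $0$ for $\mathbf{x}\in T_o\cup T_n$ near $\mathbf{x}^*$. Then both the reconstructed value $\hat u$ and the reconstructed gradient $\nabla\hat u$ are continuous across $F$ at $\mathbf{x}^*$: if $\mathbf{x}^o\in T_o$ and $\mathbf{x}^n\in T_n$ with $\|\mathbf{x}^n-\mathbf{x}^o\|=\mathcal{O}(\epsilon)$ near $\mathbf{x}^*$, then the difference of $[\hat u,\nabla\hat u^T]^T$ at $\mathbf{x}^n$ (computed with $\mathcal{N}^1_n$) and at $\mathbf{x}^o$ (computed with $\mathcal{N}^1_o$) is $\mathcal{O}(\epsilon)$. In particular, the MLS kernel values and kernel gradients (the rows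 of $\mathbf{M}^{-1}$ times the weighted basis, i.e. the case of unit nodal values $u_i=\delta_{ij}$) are continuous across cell boundaries.
   Context: The 0-ring neighbours $\mathcal{N}^0$ of a cell are its vertices; the 1-ring neighbours $\mathcal{N}^1$ of a cell are all mesh nodes that are vertices of the cell or are joined by a mesh edge to a vertex of the cell (so $\mathcal{N}^0\subset\mathcal{N}^1$). When a point moves from $T_o$ into $T_n$ through $F$, the active node set changes from $\mathcal{N}^1_o$ to $\mathcal{N}^1_n$. This is the moving-least-squares (MLS) reconstruction with complete linear polynomial basis used in the Unstructured MLS Material Point Method, with sample weights multiplied by a diminishing function $\eta$. *)

theory Defs
  imports "HOL-Analysis.Analysis"
begin

text \<open>Nodes are indexed by a type 'i, node positions are given by X. A cell is
represented by its set of vertex indices; the cell itself (as a point set) is the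
open simplex spanned by its vertices.\<close>

definition simplex_cell :: "('i \<Rightarrow> real^'d) \<Rightarrow> 'i set \<Rightarrow> bool" where
  "simplex_cell X c \<longleftrightarrow> finite c \<and> card c = CARD('d) + 1 \<and> inj_on X c
     \<and> \<not> affine_dependent (X ` c)"

definition cell_region :: "('i \<Rightarrow> real^'d) \<Rightarrow> 'i set \<Rightarrow> (real^'d) set" where
  "cell_region X c = interior (convex hull (X ` c))"

definition conforming_mesh :: "('i \<Rightarrow> real^'d) \<Rightarrow> 'i set set \<Rightarrow> bool" where
  "conforming_mesh X \<T> \<longleftrightarrow> finite \<T> \<and> \<T> \<noteq> {} \<and> inj_on X (\<Union>\<T>)
     \<and> (\<forall>c\<in>\<T>. simplex_cell X c)
     \<and> (\<forall>c1\<in>\<T>. \<forall>c2\<in>\<T>. convex hull (X ` c1) \<inter> convex hull (X ` c2)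
                             = convex hull (X ` (c1 \<inter> c2)))"

definition mesh_edge :: "'i set set \<Rightarrow> 'i \<Rightarrow> 'i \<Rightarrow> bool" where
  "mesh_edge \<T> i j \<longleftrightarrow> i \<noteq> j \<and> (\<exists>c\<in>\<T>. i \<in> c \<and> j \<in> c)"

definition ring1 :: "'i set set \<Rightarrow> 'i set \<Rightarrow> 'i set" where
  "ring1 \<T> c = c \<union> {j. \<exists>i\<in>c. mesh_edge \<T> i j}"

definition common_facet :: "('i \<Rightarrow> real^'d) \<Rightarrow> 'i set set \<Rightarrow> 'i set \<Rightarrow> 'i set
    \<Rightarrow> (real^'d) set \<Rightarrow> bool" where
  "common_facet X \<T> co cn F \<longleftrightarrow> co \<in> \<T> \<and> cn \<in> \<T> \<and> co \<noteq> cn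
     \<and> card (co \<inter> cn) = CARD('d) \<and> F = convex hull (X ` (co \<inter> cn))"

text \<open>C-infinity on an open set S: there is a family D of functions indexed by lists of
coordinate directions with D [] = f, all of them continuous on S, and D (j # js) is the
partial derivative of D js in direction j at every point of S.\<close>
definition smooth_on :: "(real^'d) set \<Rightarrow> (real^'d \<Rightarrow> real) \<Rightarrow> bool" where
  "smooth_on S f \<longleftrightarrow> open S \<and> (\<exists>D :: 'd list \<Rightarrow> real^'d \<Rightarrow> real.
      D [] = f \<and> (\<forall>js. continuous_on S (D js))
      \<and> (\<forall>js j x. x \<in> S \<longrightarrow>
           ((\<lambda>t. D js (x + t *\<^sub>R axis j 1)) has_real_derivative D (j # js) x) (at 0)))"

definition smooth_near_within :: "(real^'d) set \<Rightarrow> real^'d \<Rightarrow> (real^'d \<Rightarrow> real) \<Rightarrow> bool" where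
  "smooth_near_within A x0 f \<longleftrightarrow> (\<exists>U h. open U \<and> x0 \<in> U \<and> smooth_on U h
      \<and> (\<forall>x\<in>U \<inter> A. f x = h x))"

definition eigenvalues_mat :: "real^'n^'n \<Rightarrow> real set" where
  "eigenvalues_mat A = {e. \<exists>v. v \<noteq> 0 \<and> A *v v = e *\<^sub>R v}"

definition min_singular_value :: "real^'n^'n \<Rightarrow> real" where
  "min_singular_value A = sqrt (Min (eigenvalues_mat (transpose A ** A)))"

text \<open>p(y) = [1, y^T]^T; coordinate None is the constant entry, Some k the k-th coordinate.\<close>
definition pbasis :: "real^'d \<Rightarrow> real^('d option)" where
  "pbasis y = (\<chi> j. case j of None \<Rightarrow> 1 | Some k \<Rightarrow> y $ k)"

definition outer :: "real^'m \<Rightarrow> real^'m^'m" where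
  "outer v = (\<chi> a b. v $ a * v $ b)"

definition mod_weight :: "('i \<Rightarrow> real^'d) \<Rightarrow> (real^'d \<Rightarrow> real) \<Rightarrow> ('i \<Rightarrow> real^'d \<Rightarrow> real)
    \<Rightarrow> 'i \<Rightarrow> real^'d \<Rightarrow> real" where
  "mod_weight X w \<eta> i x = \<eta> i x * w (X i - x)"

definition mls_M :: "('i \<Rightarrow> real^'d) \<Rightarrow> (real^'d \<Rightarrow> real) \<Rightarrow> ('i \<Rightarrow> real^'d \<Rightarrow> real)
    \<Rightarrow> 'i set \<Rightarrow> real^'d \<Rightarrow> real^('d option)^('d option)" where
  "mls_M X w \<eta> N x = (\<Sum>i\<in>N. mod_weight X w \<eta> i x *\<^sub>R outer (pbasis (X i - x)))"

definition mls_b :: "('i \<Rightarrow> real^'d) \<Rightarrow> (real^'d \<Rightarrow> real) \<Rightarrow> ('i \<Rightarrow> real^'d \<Rightarrow> real)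
    \<Rightarrow> ('i \<Rightarrow> real) \<Rightarrow> 'i set \<Rightarrow> real^'d \<Rightarrow> real^('d option)" where
  "mls_b X w \<eta> u N x = (\<Sum>i\<in>N. (mod_weight X w \<eta> i x * u i) *\<^sub>R pbasis (X i - x))"

text \<open>[u_hat(x); grad u_hat(x)] = M(x)^{-1} b(x): coordinate None is the value,
coordinate Some k the k-th gradient component.\<close>
definition mls_rec :: "('i \<Rightarrow> real^'d) \<Rightarrow> (real^'d \<Rightarrow> real) \<Rightarrow> ('i \<Rightarrow> real^'d \<Rightarrow> real)
    \<Rightarrow> ('i \<Rightarrow> real) \<Rightarrow> 'i set \<Rightarrow> real^'d \<Rightarrow> real^('d option)" where
  "mls_rec X w \<eta> u N x = matrix_inv (mls_M X w \<eta> N x) *v mls_b X w \<eta> u N x"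

end

theory Submission
  imports Defs
begin

(* Near x*, the modified weight of a common node is smooth and hence Lipschitz at x*, while the
   weights of removed nodes (on T_o) and of added nodes (on T_n) vanish linearly by the
   diminishing property. So M and b, computed on either side with its own 1-ring, both approach
   the same limit, built from the common nodes only, at rate O(|x - x*|). A uniform lower bound
   sigma on the smallest singular value makes the solution of M a = b stable,
   sigma |a' - a| <= |b' - b| + |M' - M| |b| / sigma, and the O(eps) jump follows. *)

unbundle lattice_syntax

section \<open>Smallest singular value and stability of linear solves\<close>

lemma norm_matrix_vector_mult_le:
  fixes M :: "real^'n^'m"
  shows "norm (M *v v) \<le> norm M * norm v"
proof -
  have "norm (M *v v) \<le> norm (\<chi> i. norm (M $ i) * norm v)"
    by (rule norm_le_componentwise_cart) (simp add: matrix_mult_dot Cauchy_Schwarz_ineq2)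
  also have "\<dots> = norm M * norm v"
    by (simp add: norm_vec_def L2_set_right_distrib mult.commute)
  finally show ?thesis .
qed

lemma inner_symmetric_matrix:
  fixes S :: "real^'n^'n"
  assumes "transpose S = S"
  shows "inner (S *v v) w = inner v (S *v w)"
  by (metis assms dot_lmul_matrix vector_transpose_matrix)

lemma finite_eigenvalues_symmetric:
  fixes S :: "real^'n^'n"
  assumes "transpose S = S"
  shows "finite (eigenvalues_mat S)"
proof -
  define ev where "ev e = (SOME v. v \<noteq> 0 \<and> S *v v = e *\<^sub>R v)" for e
  have ev: "ev e \<noteq> 0 \<and> S *v ev e = e *\<^sub>R ev e" if "e \<in> eigenvalues_mat S" for e
    using that unfolding eigenvalues_mat_def ev_def by (rule CollectE) (rule someI_ex)
  have "inj_on ev (eigenvalues_mat S)"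
    by (rule inj_onI) (metis ev scaleR_cancel_right)
  moreover have "pairwise orthogonal (ev ` eigenvalues_mat S)"
  proof (rule pairwiseI, clarsimp)
    fix e1 e2 assume e: "e1 \<in> eigenvalues_mat S" "e2 \<in> eigenvalues_mat S" "ev e1 \<noteq> ev e2"
    have "e1 * inner (ev e1) (ev e2) = e2 * inner (ev e1) (ev e2)"
      using inner_symmetric_matrix[OF assms, of "ev e1" "ev e2"] ev[OF e(1)] ev[OF e(2)] by simp
    moreover have "e1 \<noteq> e2" using e(3) by blast
    ultimately show "orthogonal (ev e1) (ev e2)" unfolding orthogonal_def by simp
  qed
  moreover have "0 \<notin> ev ` eigenvalues_mat S" using ev by fastforce
  ultimately show ?thesis
    using pairwise_orthogonal_independent finiteI_independent finite_imageD by metis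
qed

lemma nonneg_quadratic_imp_linear_coeff_zero:
  fixes a c :: real
  assumes "\<And>t. 0 \<le> t * a + t\<^sup>2 * c"
  shows "a = 0"
proof (rule ccontr)
  assume "a \<noteq> 0"
  define k where "k = \<bar>c\<bar> + 1"
  have k: "0 < k" "c \<le> k" unfolding k_def by auto
  define t where "t = - a / (2 * k)"
  have "t * a + t\<^sup>2 * c \<le> t * a + t\<^sup>2 * k"
    using k by (intro add_left_mono mult_left_mono) auto
  also have "\<dots> = - a\<^sup>2 / (4 * k)"
    unfolding t_def using k by (simp add: power2_eq_square field_simps)
  also have "\<dots> < 0" using \<open>a \<noteq> 0\<close> k by simp
  finally show False using assms[of t] by linarith
qed

lemma norm_add_scaleR_square:
  fixes x y :: "'a::real_inner"
  shows "(norm (x + t *\<^sub>R y))\<^sup>2 = (norm x)\<^sup>2 + 2 * t * inner x y + t\<^sup>2 * (norm y)\<^sup>2"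
  unfolding power2_norm_eq_inner
  by (simp add: inner_add_left inner_add_right inner_commute algebra_simps power2_eq_square)

lemma rayleigh_minimizer_eigenvector:
  fixes A :: "real^'n^'n"
  assumes rayleigh: "\<And>z. \<mu> * (norm z)\<^sup>2 \<le> (norm (A *v z))\<^sup>2"
    and minimizer: "(norm (A *v v))\<^sup>2 = \<mu> * (norm v)\<^sup>2"
  shows "transpose A ** A *v v = \<mu> *\<^sub>R v"
proof -
  have "transpose A *v x = x v* A" for x
    by (metis transpose_transpose vector_transpose_matrix)
  then have AtA: "inner (transpose A ** A *v x) y = inner (A *v x) (A *v y)" for x y
    by (simp add: matrix_vector_mul_assoc [symmetric] dot_lmul_matrix)
  \<comment> \<open>The form |A z|^2 - mu |z|^2 is nonnegative and vanishes at v, so its first variation at v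
    vanishes in every direction w.\<close>
  have "inner (transpose A ** A *v v - \<mu> *\<^sub>R v) w = 0" for w
  proof -
    have expand: "\<mu> * (norm (v + t *\<^sub>R w))\<^sup>2 \<le> (norm (A *v v + t *\<^sub>R (A *v w)))\<^sup>2" for t
      using rayleigh[of "v + t *\<^sub>R w"] by (simp add: matrix_vector_right_distrib matrix_vector_mult_scaleR)
    have "0 \<le> t * (2 * (inner (A *v v) (A *v w) - \<mu> * inner v w))
              + t\<^sup>2 * ((norm (A *v w))\<^sup>2 - \<mu> * (norm w)\<^sup>2)" for t
      using expand[of t] minimizer unfolding norm_add_scaleR_square by (simp add: algebra_simps)
    then have "inner (A *v v) (A *v w) - \<mu> * inner v w = 0"
      using nonneg_quadratic_imp_linear_coeff_zero by force
    then show ?thesis by (simp add: inner_diff_left AtA)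
  qed
  from this[of "transpose A ** A *v v - \<mu> *\<^sub>R v"] show ?thesis
    by simp
qed

lemma rayleigh_minimum_in_eigenvalues:
  fixes A :: "real^'n^'n"
  obtains \<mu> where "\<mu> \<in> eigenvalues_mat (transpose A ** A)" "\<And>z. \<mu> * (norm z)\<^sup>2 \<le> (norm (A *v z))\<^sup>2"
proof -
  have "compact (sphere (0::real^'n) 1)" "sphere (0::real^'n) 1 \<noteq> {}"
    by simp_all
  moreover have "continuous_on (sphere 0 1) (\<lambda>y. norm (A *v y))"
    by (intro continuous_on_norm linear_continuous_on matrix_vector_mul_bounded_linear)
  ultimately obtain v where "v \<in> sphere 0 1" and v_min: "\<forall>y \<in> sphere 0 1. norm (A *v v) \<le> norm (A *v y)"
    using continuous_attains_inf by blast
  then have v: "norm v = 1" by simp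
  define \<mu> where "\<mu> = (norm (A *v v))\<^sup>2"
  have rayleigh: "\<mu> * (norm z)\<^sup>2 \<le> (norm (A *v z))\<^sup>2" for z
  proof (cases "z = 0")
    case False
    have "norm (A *v v) \<le> norm (A *v (inverse (norm z) *\<^sub>R z))"
      using False v_min by simp
    then have "norm (A *v v) * norm z \<le> norm (A *v z)"
      using False by (simp add: matrix_vector_mult_scaleR field_simps)
    then have "(norm (A *v v) * norm z)\<^sup>2 \<le> (norm (A *v z))\<^sup>2"
      by (rule power_mono) simp
    then show ?thesis
      unfolding \<mu>_def by (simp add: power_mult_distrib)
  qed simp
  moreover have "(norm (A *v v))\<^sup>2 = \<mu> * (norm v)\<^sup>2"
    using v unfolding \<mu>_def by simp
  ultimately have "transpose A ** A *v v = \<mu> *\<^sub>R v"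
    by (rule rayleigh_minimizer_eigenvector)
  then have "\<mu> \<in> eigenvalues_mat (transpose A ** A)"
    using v unfolding eigenvalues_mat_def by (intro CollectI exI[of _ v]) auto
  then show thesis using rayleigh by (rule that)
qed

lemma min_singular_value_lower_bound:
  fixes A :: "real^'n^'n"
  assumes "\<sigma> \<le> min_singular_value A"
  shows "\<sigma> * norm v \<le> norm (A *v v)"
proof -
  obtain \<mu> where \<mu>: "\<mu> \<in> eigenvalues_mat (transpose A ** A)" "\<And>z. \<mu> * (norm z)\<^sup>2 \<le> (norm (A *v z))\<^sup>2"
    using rayleigh_minimum_in_eigenvalues[of A] by blast
  have "finite (eigenvalues_mat (transpose A ** A))"
    by (rule finite_eigenvalues_symmetric) (simp add: matrix_transpose_mul)
  with \<mu>(1) assms have "\<sigma> \<le> sqrt \<mu>"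
    unfolding min_singular_value_def by (meson Min_le order_trans real_sqrt_le_mono)
  then have "\<sigma> * norm v \<le> sqrt \<mu> * norm v"
    by (simp add: mult_right_mono)
  also have "\<dots> = sqrt (\<mu> * (norm v)\<^sup>2)"
    by (simp add: real_sqrt_mult)
  also have "\<dots> \<le> norm (A *v v)"
    using real_sqrt_le_mono[OF \<mu>(2)[of v]] by simp
  finally show ?thesis .
qed

lemma matrix_inv_solves:
  fixes A :: "real^'n^'n"
  assumes "0 < \<sigma>" "\<And>v. \<sigma> * norm v \<le> norm (A *v v)"
  shows "A *v (matrix_inv A *v y) = y"
proof -
  have "inj ((*v) A)"
  proof (rule injI)
    fix x y assume "A *v x = A *v y"
    then have "\<sigma> * norm (x - y) \<le> 0"
      using assms(2)[of "x - y"] by (simp add: matrix_vector_mult_diff_distrib)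
    then show "x = y" using assms(1) by (simp add: mult_le_0_iff)
  qed
  then have "invertible A"
    using matrix_left_invertible_injective invertible_left_inverse by blast
  then have "A ** matrix_inv A = mat 1"
    unfolding invertible_def matrix_inv_def by (rule someI2_ex) blast
  then show ?thesis
    by (simp add: matrix_vector_mul_assoc)
qed

lemma solution_perturbation:
  fixes A A' :: "real^'n^'n"
  assumes \<sigma>: "0 < \<sigma>" "\<And>v. \<sigma> * norm v \<le> norm (A *v v)" "\<And>v. \<sigma> * norm v \<le> norm (A' *v v)"
    and "norm (A' - A) \<le> e" "norm (b' - b) \<le> e" "norm b \<le> B"
  shows "norm (matrix_inv A' *v b' - matrix_inv A *v b) \<le> (1 + B / \<sigma>) / \<sigma> * e"
proof -
  define a a' where "a = matrix_inv A *v b" and "a' = matrix_inv A' *v b'"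
  have Aa: "A *v a = b" and Aa': "A' *v a' = b'"
    unfolding a_def a'_def using matrix_inv_solves \<sigma> by blast+
  have "norm a \<le> B / \<sigma>"
    using \<sigma>(2)[of a] \<sigma>(1) assms(6) by (simp add: Aa field_simps)
  then have "norm (A - A') * norm a \<le> e * (B / \<sigma>)"
    using assms(4) order_trans[OF norm_ge_zero assms(5)] by (intro mult_mono) (auto simp: norm_minus_commute)
  then have "norm ((A - A') *v a) \<le> e * (B / \<sigma>)"
    using norm_matrix_vector_mult_le[of "A - A'" a] by linarith
  moreover have "A' *v (a' - a) = (b' - b) + (A - A') *v a"
    using Aa Aa' by (simp add: matrix_vector_mult_diff_distrib matrix_vector_mult_diff_rdistrib)
  then have "norm (A' *v (a' - a)) \<le> norm (b' - b) + norm ((A - A') *v a)"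
    by (simp add: norm_triangle_ineq)
  ultimately have "\<sigma> * norm (a' - a) \<le> e + e * (B / \<sigma>)"
    using \<sigma>(3)[of "a' - a"] assms(5) by linarith
  then show ?thesis
    unfolding a_def a'_def using \<sigma>(1) by (simp add: field_simps)
qed

section \<open>Calm functions\<close>

text \<open>Calmness of f at x0 relative to S, with c in the role of the one-sided value of f at x0.
  The point x0 need not lie in S: in the application it lies on the common facet, outside both
  open cells.\<close>
definition calm_within :: "'a::real_normed_vector \<Rightarrow> 'a set \<Rightarrow> ('a \<Rightarrow> 'b::real_normed_vector) \<Rightarrow> 'b \<Rightarrow> bool" where
  "calm_within x0 S f c \<longleftrightarrow> (\<exists>K. \<forall>\<^sub>F x in nhds x0 \<sqinter> principal S. norm (f x - c) \<le> K * norm (x - x0))"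

lemma eventually_nhds_inf_principal_iff:
  "(\<forall>\<^sub>F x in nhds x0 \<sqinter> principal S. P x) \<longleftrightarrow> (\<exists>\<delta>>0. \<forall>x\<in>S. norm (x - x0) < \<delta> \<longrightarrow> P x)"
  unfolding eventually_inf_principal eventually_nhds_metric dist_norm by blast

lemma calm_withinE:
  assumes "calm_within x0 S f c"
  obtains K where "0 \<le> K" "\<forall>\<^sub>F x in nhds x0 \<sqinter> principal S. norm (f x - c) \<le> K * norm (x - x0)"
proof -
  from assms obtain K where "\<forall>\<^sub>F x in nhds x0 \<sqinter> principal S. norm (f x - c) \<le> K * norm (x - x0)"
    unfolding calm_within_def by blast
  then have "\<forall>\<^sub>F x in nhds x0 \<sqinter> principal S. norm (f x - c) \<le> max K 0 * norm (x - x0)"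
  proof eventually_elim
    case (elim x)
    show ?case using elim mult_right_mono[OF max.cobounded1[of K 0] norm_ge_zero[of "x - x0"]] by linarith
  qed
  then show thesis by (rule that[OF max.cobounded2])
qed

lemma calm_within_common_constant:
  assumes "calm_within x0 S f c" "calm_within x0 S g d" "\<forall>\<^sub>F x in nhds x0 \<sqinter> principal S. P x"
  obtains K \<delta> where "0 \<le> K" "0 < \<delta>"
    "\<And>x. x \<in> S \<Longrightarrow> norm (x - x0) < \<delta> \<Longrightarrow>
       norm (f x - c) \<le> K * norm (x - x0) \<and> norm (g x - d) \<le> K * norm (x - x0) \<and> P x"
proof -
  obtain K1 where K1: "0 \<le> K1" "\<forall>\<^sub>F x in nhds x0 \<sqinter> principal S. norm (f x - c) \<le> K1 * norm (x - x0)"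
    using assms(1) by (rule calm_withinE)
  obtain K2 where K2: "0 \<le> K2" "\<forall>\<^sub>F x in nhds x0 \<sqinter> principal S. norm (g x - d) \<le> K2 * norm (x - x0)"
    using assms(2) by (rule calm_withinE)
  from K1(2) K2(2) assms(3) have "\<forall>\<^sub>F x in nhds x0 \<sqinter> principal S.
      norm (f x - c) \<le> (K1 + K2) * norm (x - x0) \<and> norm (g x - d) \<le> (K1 + K2) * norm (x - x0) \<and> P x"
    by eventually_elim (use K1(1) K2(1) in \<open>auto simp: distrib_right intro: add_increasing2 add_increasing\<close>)
  then obtain \<delta> where "0 < \<delta>" "\<forall>x\<in>S. norm (x - x0) < \<delta> \<longrightarrow>
      norm (f x - c) \<le> (K1 + K2) * norm (x - x0) \<and> norm (g x - d) \<le> (K1 + K2) * norm (x - x0) \<and> P x"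
    unfolding eventually_nhds_inf_principal_iff by blast
  then show thesis using K1(1) K2(1) by (intro that[of "K1 + K2" \<delta>]) auto
qed

lemma calm_within_tendsto:
  assumes "calm_within x0 S f c"
  shows "(f \<longlongrightarrow> c) (nhds x0 \<sqinter> principal S)"
proof -
  obtain K where "\<forall>\<^sub>F x in nhds x0 \<sqinter> principal S. norm (f x - c) \<le> norm (x - x0) * K"
    using assms unfolding calm_within_def by (auto simp: mult.commute)
  moreover have "((\<lambda>x. x) \<longlongrightarrow> x0) (nhds x0 \<sqinter> principal S)"
    by (rule tendsto_mono[OF inf_le1 filterlim_ident])
  then have "((\<lambda>x. x - x0) \<longlongrightarrow> x0 - x0) (nhds x0 \<sqinter> principal S)"
    by (intro tendsto_diff tendsto_const)
  ultimately show ?thesis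
    using tendsto_0_le LIM_zero_iff by (metis diff_self)
qed

lemma calm_within_const: "calm_within x0 S (\<lambda>_. c) c"
  unfolding calm_within_def by (intro exI[of _ 0]) simp

lemma calm_within_diff_ident: "calm_within x0 S (\<lambda>x. p - x) (p - x0)"
  unfolding calm_within_def by (intro exI[of _ 1]) (simp add: norm_minus_commute)

lemma calm_within_subset:
  assumes "calm_within x0 S f c" "T \<subseteq> S"
  shows "calm_within x0 T f c"
proof -
  from assms(1) obtain K where "\<forall>\<^sub>F x in nhds x0. x \<in> S \<longrightarrow> norm (f x - c) \<le> K * norm (x - x0)"
    unfolding calm_within_def eventually_inf_principal by blast
  then have "\<forall>\<^sub>F x in nhds x0. x \<in> T \<longrightarrow> norm (f x - c) \<le> K * norm (x - x0)"
    by eventually_elim (use assms(2) in blast)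
  then show ?thesis unfolding calm_within_def eventually_inf_principal by blast
qed

lemma calm_within_cong:
  assumes "calm_within x0 S f c" "\<forall>\<^sub>F x in nhds x0 \<sqinter> principal S. g x = f x"
  shows "calm_within x0 S g c"
proof -
  from assms(1) obtain K where "\<forall>\<^sub>F x in nhds x0 \<sqinter> principal S. norm (f x - c) \<le> K * norm (x - x0)"
    unfolding calm_within_def by blast
  with assms(2) have "\<forall>\<^sub>F x in nhds x0 \<sqinter> principal S. norm (g x - c) \<le> K * norm (x - x0)"
    by eventually_elim simp
  then show ?thesis unfolding calm_within_def by blast
qed

lemma calm_within_add:
  assumes "calm_within x0 S f c" "calm_within x0 S g d"
  shows "calm_within x0 S (\<lambda>x. f x + g x) (c + d)"
proof -
  obtain K L where
    "\<forall>\<^sub>F x in nhds x0 \<sqinter> principal S. norm (f x - c) \<le> K * norm (x - x0)"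
    "\<forall>\<^sub>F x in nhds x0 \<sqinter> principal S. norm (g x - d) \<le> L * norm (x - x0)"
    using assms unfolding calm_within_def by blast
  then have "\<forall>\<^sub>F x in nhds x0 \<sqinter> principal S. norm (f x + g x - (c + d)) \<le> (K + L) * norm (x - x0)"
  proof eventually_elim
    case (elim x)
    have "norm (f x + g x - (c + d)) \<le> norm (f x - c) + norm (g x - d)"
      by (metis add_diff_add norm_triangle_ineq)
    with elim show ?case by (simp add: distrib_right)
  qed
  then show ?thesis unfolding calm_within_def by blast
qed

lemma calm_within_sum:
  assumes "finite N" "\<And>i. i \<in> N \<Longrightarrow> calm_within x0 S (f i) (c i)"
  shows "calm_within x0 S (\<lambda>x. \<Sum>i\<in>N. f i x) (\<Sum>i\<in>N. c i)"
  using assms by (induction N rule: finite_induct) (auto intro: calm_within_const calm_within_add)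

lemma calm_within_bounded_bilinear:
  assumes "bounded_bilinear bl" "calm_within x0 S f a" "calm_within x0 S g b"
  shows "calm_within x0 S (\<lambda>x. bl (f x) (g x)) (bl a b)"
proof -
  interpret bounded_bilinear bl by (fact assms(1))
  obtain B where B: "0 < B" "\<And>u v. norm (bl u v) \<le> norm u * norm v * B"
    using pos_bounded by blast
  obtain K where K: "0 \<le> K" "\<forall>\<^sub>F x in nhds x0 \<sqinter> principal S. norm (f x - a) \<le> K * norm (x - x0)"
    using assms(2) by (rule calm_withinE)
  obtain L where L: "0 \<le> L" "\<forall>\<^sub>F x in nhds x0 \<sqinter> principal S. norm (g x - b) \<le> L * norm (x - x0)"
    using assms(3) by (rule calm_withinE)
  have "\<forall>\<^sub>F x in nhds x0 \<sqinter> principal S. norm (x - x0) < 1"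
    using eventually_nhds_inf_principal_iff zero_less_one by blast
  with K(2) L(2) have "\<forall>\<^sub>F x in nhds x0 \<sqinter> principal S.
      norm (bl (f x) (g x) - bl a b) \<le> (K * (norm b + L) + norm a * L) * B * norm (x - x0)"
  proof eventually_elim
    case (elim x)
    have "norm (g x) \<le> norm b + L"
      using elim L(1) norm_triangle_ineq2[of "g x" b] mult_left_le[of "norm (x - x0)" L] by linarith
    then have "norm (f x - a) * norm (g x) * B \<le> K * norm (x - x0) * (norm b + L) * B"
      using elim B(1) K(1) by (intro mult_right_mono mult_mono) auto
    moreover have "norm a * norm (g x - b) * B \<le> norm a * (L * norm (x - x0)) * B"
      using elim B(1) by (intro mult_right_mono mult_left_mono) auto
    moreover have "bl (f x) (g x) - bl a b = bl (f x - a) (g x) + bl a (g x - b)"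
      by (simp add: diff_left diff_right)
    then have "norm (bl (f x) (g x) - bl a b)
        \<le> norm (f x - a) * norm (g x) * B + norm a * norm (g x - b) * B"
      using B(2)[of "f x - a" "g x"] B(2)[of a "g x - b"] norm_triangle_ineq[of "bl (f x - a) (g x)" "bl a (g x - b)"]
      by simp
    moreover have "K * norm (x - x0) * (norm b + L) * B + norm a * (L * norm (x - x0)) * B
        = (K * (norm b + L) + norm a * L) * B * norm (x - x0)"
      by (simp add: algebra_simps)
    ultimately show ?case by linarith
  qed
  then show ?thesis unfolding calm_within_def by blast
qed

lemma calm_within_bounded_linear:
  assumes "bounded_linear L" "calm_within x0 S f c"
  shows "calm_within x0 S (\<lambda>x. L (f x)) (L c)"
proof -
  interpret bounded_linear L by (fact assms(1))
  obtain B where B: "\<And>v. norm (L v) \<le> norm v * B" "0 < B"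
    using pos_bounded by blast
  obtain K where "\<forall>\<^sub>F x in nhds x0 \<sqinter> principal S. norm (f x - c) \<le> K * norm (x - x0)"
    using assms(2) unfolding calm_within_def by blast
  then have "\<forall>\<^sub>F x in nhds x0 \<sqinter> principal S. norm (L (f x) - L c) \<le> B * K * norm (x - x0)"
  proof eventually_elim
    case (elim x)
    have "norm (L (f x) - L c) \<le> norm (f x - c) * B"
      using B(1) by (simp add: diff [symmetric])
    also have "\<dots> \<le> B * K * norm (x - x0)"
      using elim B(2) by (simp add: mult.commute mult_left_mono mult.assoc)
    finally show ?case .
  qed
  then show ?thesis unfolding calm_within_def by blast
qed

lemma calm_within_compose:
  assumes "calm_within y0 UNIV g d" "calm_within x0 S f y0"
  shows "calm_within x0 S (\<lambda>x. g (f x)) d"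
proof -
  obtain K where K: "0 \<le> K" "\<forall>\<^sub>F y in nhds y0 \<sqinter> principal UNIV. norm (g y - d) \<le> K * norm (y - y0)"
    using assms(1) by (rule calm_withinE)
  obtain L where L: "\<forall>\<^sub>F x in nhds x0 \<sqinter> principal S. norm (f x - y0) \<le> L * norm (x - x0)"
    using assms(2) unfolding calm_within_def by blast
  have "\<forall>\<^sub>F x in nhds x0 \<sqinter> principal S. norm (g (f x) - d) \<le> K * norm (f x - y0)"
    using filterlim_iff[THEN iffD1, OF calm_within_tendsto[OF assms(2)], rule_format] K(2) by simp
  with L have "\<forall>\<^sub>F x in nhds x0 \<sqinter> principal S. norm (g (f x) - d) \<le> K * L * norm (x - x0)"
  proof eventually_elim
    case (elim x)
    then show ?case using mult_left_mono[OF elim(1) K(1)] by (simp add: mult.assoc)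
  qed
  then show ?thesis unfolding calm_within_def by blast
qed

lemma singular_value_bounded_solutions_jump:
  fixes Ao An :: "'a::real_normed_vector \<Rightarrow> real^'n^'n" and bo bn :: "'a \<Rightarrow> real^'n"
  assumes "calm_within x0 So Ao A" "calm_within x0 So bo b"
    and "calm_within x0 Sn An A" "calm_within x0 Sn bn b"
    and \<sigma>: "0 < \<sigma>"
    and lower_o: "\<forall>\<^sub>F x in nhds x0 \<sqinter> principal So. \<sigma> \<le> min_singular_value (Ao x)"
    and lower_n: "\<forall>\<^sub>F x in nhds x0 \<sqinter> principal Sn. \<sigma> \<le> min_singular_value (An x)"
  shows "\<exists>C>0. \<exists>\<delta>>0. \<forall>\<epsilon> xo xn. xo \<in> So \<and> xn \<in> Sn \<and> \<epsilon> < \<delta>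
           \<and> norm (xo - x0) \<le> \<epsilon> \<and> norm (xn - x0) \<le> \<epsilon> \<longrightarrow>
           norm (matrix_inv (An xn) *v bn xn - matrix_inv (Ao xo) *v bo xo) \<le> C * \<epsilon>"
proof -
  obtain Ko \<delta>o where Ko: "0 \<le> Ko" "0 < \<delta>o" "\<And>x. x \<in> So \<Longrightarrow> norm (x - x0) < \<delta>o \<Longrightarrow>
      norm (Ao x - A) \<le> Ko * norm (x - x0) \<and> norm (bo x - b) \<le> Ko * norm (x - x0)
      \<and> \<sigma> \<le> min_singular_value (Ao x)"
    using calm_within_common_constant[OF assms(1,2) lower_o] by blast
  obtain Kn \<delta>n where Kn: "0 \<le> Kn" "0 < \<delta>n" "\<And>x. x \<in> Sn \<Longrightarrow> norm (x - x0) < \<delta>n \<Longrightarrow>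
      norm (An x - A) \<le> Kn * norm (x - x0) \<and> norm (bn x - b) \<le> Kn * norm (x - x0)
      \<and> \<sigma> \<le> min_singular_value (An x)"
    using calm_within_common_constant[OF assms(3,4) lower_n] by blast
  define K where "K = Ko + Kn"
  define C where "C = (1 + (norm b + K) / \<sigma>) / \<sigma> * K + 1"
  have "norm (matrix_inv (An xn) *v bn xn - matrix_inv (Ao xo) *v bo xo) \<le> C * \<epsilon>"
    if "xo \<in> So" "xn \<in> Sn" "\<epsilon> < min 1 (min \<delta>o \<delta>n)" "norm (xo - x0) \<le> \<epsilon>" "norm (xn - x0) \<le> \<epsilon>"
    for \<epsilon> xo xn
  proof -
    have "0 \<le> \<epsilon>" using that(4) norm_ge_zero order_trans by blast
    have "\<epsilon> < 1" "norm (xo - x0) < \<delta>o" "norm (xn - x0) < \<delta>n"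
      using that(3-5) by auto
    with that(1,2) Ko(3) Kn(3) have o: "norm (Ao xo - A) \<le> Ko * \<epsilon>" "norm (bo xo - b) \<le> Ko * \<epsilon>"
        "\<sigma> \<le> min_singular_value (Ao xo)"
      and n: "norm (An xn - A) \<le> Kn * \<epsilon>" "norm (bn xn - b) \<le> Kn * \<epsilon>"
        "\<sigma> \<le> min_singular_value (An xn)"
      using mult_left_mono[OF that(4) Ko(1)] mult_left_mono[OF that(5) Kn(1)] by force+
    have "norm (An xn - Ao xo) \<le> K * \<epsilon>"
      using norm_triangle_ineq4[of "An xn - A" "Ao xo - A"] o(1) n(1) unfolding K_def by (simp add: distrib_right)
    moreover have "norm (bn xn - bo xo) \<le> K * \<epsilon>"
      using norm_triangle_ineq4[of "bn xn - b" "bo xo - b"] o(2) n(2) unfolding K_def by (simp add: distrib_right)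
    moreover have "norm (bo xo) \<le> norm b + K"
      using norm_triangle_ineq2[of "bo xo" b] o(2) mult_left_le[of \<epsilon> Ko] \<open>\<epsilon> < 1\<close> \<open>0 \<le> \<epsilon>\<close> Ko(1) Kn(1)
      unfolding K_def by linarith
    ultimately have "norm (matrix_inv (An xn) *v bn xn - matrix_inv (Ao xo) *v bo xo)
        \<le> (1 + (norm b + K) / \<sigma>) / \<sigma> * (K * \<epsilon>)"
      by (intro solution_perturbation[OF \<sigma> min_singular_value_lower_bound[OF o(3)]
          min_singular_value_lower_bound[OF n(3)]])
    also have "\<dots> \<le> C * \<epsilon>"
      unfolding C_def using \<sigma> \<open>0 \<le> \<epsilon>\<close> by (simp add: field_simps)
    finally show ?thesis .
  qed
  moreover have "0 < C"
    unfolding C_def K_def using Ko(1) Kn(1) \<sigma> by (simp add: add_nonneg_pos)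
  ultimately show ?thesis
    using Ko(2) Kn(2) by (intro exI[of _ C] conjI exI[of _ "min 1 (min \<delta>o \<delta>n)"] allI impI) auto
qed

section \<open>Functions with continuous partial derivatives are calm\<close>

lemma axis_increment_bound:
  fixes h :: "real^'d \<Rightarrow> real"
  assumes deriv: "\<And>x. x \<in> C \<Longrightarrow> ((\<lambda>t. h (x + t *\<^sub>R axis k 1)) has_real_derivative h' x) (at 0)"
    and bound: "\<And>x. x \<in> C \<Longrightarrow> \<bar>h' x\<bar> \<le> M"
    and segment: "\<And>s. s \<in> closed_segment 0 t \<Longrightarrow> y + s *\<^sub>R axis k 1 \<in> C"
  shows "\<bar>h (y + t *\<^sub>R axis k 1) - h y\<bar> \<le> M * \<bar>t\<bar>"
proof -
  define \<phi> where "\<phi> s = h (y + s *\<^sub>R axis k 1)" for s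
  have "(\<phi> has_real_derivative h' (y + s *\<^sub>R axis k 1)) (at s within closed_segment 0 t)"
    if s: "s \<in> closed_segment 0 t" for s
  proof -
    have "((\<lambda>\<tau>. h ((y + s *\<^sub>R axis k 1) + \<tau> *\<^sub>R axis k 1)) has_real_derivative h' (y + s *\<^sub>R axis k 1)) (at 0)"
      using deriv segment s by blast
    then have "((\<lambda>\<tau>. \<phi> (\<tau> + s)) has_real_derivative h' (y + s *\<^sub>R axis k 1)) (at 0)"
      unfolding \<phi>_def by (simp add: algebra_simps scaleR_add_left)
    then have "(\<phi> has_real_derivative h' (y + s *\<^sub>R axis k 1)) (at s)"
      using DERIV_shift[of \<phi> _ 0 s] by simp
    then show ?thesis
      by (rule has_field_derivative_at_within)
  qed
  moreover have "norm (h' (y + s *\<^sub>R axis k 1)) \<le> M" if "s \<in> closed_segment 0 t" for s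
    using bound segment that by simp
  ultimately have "norm (\<phi> t - \<phi> 0) \<le> M * norm (t - 0)"
    by (intro field_differentiable_bound[OF convex_closed_segment]) auto
  then show ?thesis unfolding \<phi>_def by simp
qed

lemma bounded_partials_increment_bound:
  fixes h :: "real^'d \<Rightarrow> real"
  assumes deriv: "\<And>k x. x \<in> cball x0 r \<Longrightarrow> ((\<lambda>t. h (x + t *\<^sub>R axis k 1)) has_real_derivative h' k x) (at 0)"
    and bound: "\<And>k x. x \<in> cball x0 r \<Longrightarrow> \<bar>h' k x\<bar> \<le> M"
    and x: "x \<in> cball x0 r"
  shows "\<bar>h x - h x0\<bar> \<le> M * CARD('d) * norm (x - x0)"
proof -
  \<comment> \<open>Walk from x0 to x changing one coordinate at a time. The intermediate points stay in the
    ball because their offsets from x0 are dominated coordinatewise by those of x.\<close>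
  define mix where "mix J = (\<chi> k. if k \<in> J then x $ k else x0 $ k)" for J
  have dominated: "y \<in> cball x0 r" if "\<And>k. \<bar>y $ k - x0 $ k\<bar> \<le> \<bar>x $ k - x0 $ k\<bar>" for y
    using x that norm_le_componentwise_cart[of "y - x0" "x - x0"] by (simp add: dist_norm norm_minus_commute)
  have walk: "\<bar>h (mix J) - h x0\<bar> \<le> M * (\<Sum>k\<in>J. \<bar>x $ k - x0 $ k\<bar>)" for J
  proof (induction J rule: infinite_finite_induct)
    case empty
    have "mix {} = x0" unfolding mix_def by (simp add: vec_eq_iff)
    then show ?case by simp
  next
    case (insert k J)
    have step: "mix (insert k J) = mix J + (x $ k - x0 $ k) *\<^sub>R axis k 1"
      using insert(2) unfolding mix_def by (auto simp: vec_eq_iff axis_def)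
    have "mix J + s *\<^sub>R axis k 1 \<in> cball x0 r" if "s \<in> closed_segment 0 (x $ k - x0 $ k)" for s
    proof (rule dominated)
      have "\<bar>s\<bar> \<le> \<bar>x $ k - x0 $ k\<bar>"
        using that by (auto simp: closed_segment_eq_real_ivl split: if_splits)
      then show "\<bar>(mix J + s *\<^sub>R axis k 1) $ j - x0 $ j\<bar> \<le> \<bar>x $ j - x0 $ j\<bar>" for j
        using insert(2) by (auto simp: mix_def axis_def)
    qed
    then have "\<bar>h (mix (insert k J)) - h (mix J)\<bar> \<le> M * \<bar>x $ k - x0 $ k\<bar>"
      unfolding step by (intro axis_increment_bound[OF deriv bound])
    then show ?case using insert by (simp add: distrib_left)
  qed simp
  have "mix UNIV = x" unfolding mix_def by (simp add: vec_eq_iff)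
  then have "\<bar>h x - h x0\<bar> \<le> M * (\<Sum>k\<in>UNIV. \<bar>x $ k - x0 $ k\<bar>)"
    using walk[of UNIV] by simp
  also have "\<dots> \<le> M * (CARD('d) * norm (x - x0))"
    using component_le_norm_cart[of "x - x0"] bound[OF x]
    by (intro mult_left_mono sum_bounded_above[of UNIV, simplified]) (auto intro: order_trans[OF abs_ge_zero])
  finally show ?thesis by (simp add: mult.assoc)
qed

lemma continuous_partials_imp_calm_within:
  fixes h :: "real^'d \<Rightarrow> real"
  assumes "open U" "x0 \<in> U"
    and cont: "\<And>k. continuous_on U (h' k)"
    and deriv: "\<And>k x. x \<in> U \<Longrightarrow> ((\<lambda>t. h (x + t *\<^sub>R axis k 1)) has_real_derivative h' k x) (at 0)"
  shows "calm_within x0 S h (h x0)"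
proof -
  obtain r where r: "0 < r" "cball x0 r \<subseteq> U"
    using assms(1,2) open_contains_cball by blast
  have "continuous_on (cball x0 r) (\<lambda>x. \<Sum>k\<in>UNIV. \<bar>h' k x\<bar>)"
    using cont r(2) by (intro continuous_intros) (auto intro: continuous_on_subset)
  then have "bounded ((\<lambda>x. \<Sum>k\<in>UNIV. \<bar>h' k x\<bar>) ` cball x0 r)"
    by (intro compact_imp_bounded compact_continuous_image compact_cball)
  then obtain M where "\<forall>y \<in> (\<lambda>x. \<Sum>k\<in>UNIV. \<bar>h' k x\<bar>) ` cball x0 r. norm y \<le> M"
    unfolding bounded_iff by blast
  then have bound: "\<bar>h' k x\<bar> \<le> M" if "x \<in> cball x0 r" for k x
    using that member_le_sum[of k UNIV "\<lambda>k. \<bar>h' k x\<bar>"] by force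
  have "((\<lambda>t. h (x + t *\<^sub>R axis k 1)) has_real_derivative h' k x) (at 0)" if "x \<in> cball x0 r" for k x
    using deriv r(2) that by blast
  then have "\<bar>h x - h x0\<bar> \<le> M * CARD('d) * norm (x - x0)" if "x \<in> cball x0 r" for x
    using bound that by (rule bounded_partials_increment_bound)
  then show ?thesis
    unfolding calm_within_def eventually_nhds_inf_principal_iff using r(1)
    by (intro exI[of _ "M * CARD('d)"] exI[of _ r]) (auto simp: dist_norm norm_minus_commute)
qed

lemma smooth_on_imp_calm_within:
  assumes "smooth_on U h" "x0 \<in> U"
  shows "calm_within x0 S h (h x0)"
proof -
  from assms(1) obtain D :: "'a list \<Rightarrow> real^'a \<Rightarrow> real" where D:
    "open U" "D [] = h" "\<And>js. continuous_on U (D js)"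
    "\<And>js j x. x \<in> U \<Longrightarrow> ((\<lambda>t. D js (x + t *\<^sub>R axis j 1)) has_real_derivative D (j # js) x) (at 0)"
    unfolding smooth_on_def by blast
  show ?thesis
    using continuous_partials_imp_calm_within[OF D(1) assms(2) D(3) D(4)[of _ "[]"]]
    unfolding D(2) .
qed

lemma smooth_near_within_imp_calm_within:
  assumes "smooth_near_within A x0 f"
  shows "\<exists>c. calm_within x0 A f c"
proof -
  from assms obtain U h where U: "open U" "x0 \<in> U" "smooth_on U h" "\<forall>x\<in>U \<inter> A. f x = h x"
    unfolding smooth_near_within_def by blast
  have "\<forall>\<^sub>F x in nhds x0. x \<in> U"
    using U(1,2) by (rule eventually_nhds_in_open)
  then have "\<forall>\<^sub>F x in nhds x0 \<sqinter> principal A. f x = h x"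
    unfolding eventually_inf_principal using U(4) by (auto elim: eventually_mono)
  with smooth_on_imp_calm_within[OF U(3,2)] have "calm_within x0 A f (h x0)"
    by (rule calm_within_cong)
  then show ?thesis ..
qed

section \<open>The MLS system on both sides of a facet\<close>

lemma finite_ring1:
  assumes "conforming_mesh X \<T>" "c \<in> \<T>"
  shows "finite (ring1 \<T> c)"
proof -
  have "finite (\<Union>\<T>)"
    using assms(1) unfolding conforming_mesh_def simplex_cell_def by blast
  moreover have "ring1 \<T> c \<subseteq> \<Union>\<T>"
    using assms(2) unfolding ring1_def mesh_edge_def by blast
  ultimately show ?thesis by (rule finite_subset[rotated])
qed

lemma bounded_bilinear_outer_product: "bounded_bilinear (\<lambda>a b :: real^'m. \<chi> i j. a $ i * b $ j)"
  unfolding bilinear_conv_bounded_bilinear [symmetric]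
  by (auto simp: bilinear_def vec_eq_iff algebra_simps intro!: linearI)

lemma calm_within_pbasis: "calm_within x0 S (\<lambda>x. pbasis (p - x)) (pbasis (p - x0))"
proof -
  have "linear (\<lambda>y. pbasis y - pbasis 0)"
    by (rule linearI) (simp_all add: pbasis_def vec_eq_iff split: option.split)
  then have "calm_within x0 S (\<lambda>x. pbasis 0 + (pbasis (p - x) - pbasis 0)) (pbasis 0 + (pbasis (p - x0) - pbasis 0))"
    by (intro calm_within_add calm_within_const calm_within_bounded_linear[OF _ calm_within_diff_ident])
      (simp add: linear_conv_bounded_linear)
  then show ?thesis by simp
qed

lemma calm_within_mod_weight_vanishing:
  assumes "smooth_on UNIV w" "calm_within x0 S (\<eta> i) 0"
  shows "calm_within x0 S (mod_weight X w \<eta> i) 0"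
proof -
  have "calm_within x0 S (\<lambda>x. w (X i - x)) (w (X i - x0))"
    using smooth_on_imp_calm_within[OF assms(1)] calm_within_diff_ident by (rule calm_within_compose) simp
  from calm_within_bounded_bilinear[OF bounded_bilinear_mult assms(2) this]
  show ?thesis unfolding mod_weight_def by simp
qed

lemma calm_within_mls_M_b:
  assumes "finite N"
    and common: "\<And>i. i \<in> N \<inter> N' \<Longrightarrow> calm_within x0 S (mod_weight X w \<eta> i) (c i)"
    and vanishing: "\<And>i. i \<in> N - N' \<Longrightarrow> calm_within x0 S (mod_weight X w \<eta> i) 0"
  shows "calm_within x0 S (mls_M X w \<eta> N) (\<Sum>i\<in>N \<inter> N'. c i *\<^sub>R outer (pbasis (X i - x0)))"
    and "calm_within x0 S (mls_b X w \<eta> u N) (\<Sum>i\<in>N \<inter> N'. (c i * u i) *\<^sub>R pbasis (X i - x0))"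
proof -
  define c' where "c' i = (if i \<in> N' then c i else 0)" for i
  have weight: "calm_within x0 S (mod_weight X w \<eta> i) (c' i)" if "i \<in> N" for i
    using that common vanishing unfolding c'_def by auto
  have "calm_within x0 S (mls_M X w \<eta> N) (\<Sum>i\<in>N. c' i *\<^sub>R outer (pbasis (X i - x0)))"
    unfolding mls_M_def outer_def using assms(1)
    by (intro calm_within_sum calm_within_bounded_bilinear[OF bounded_bilinear_scaleR weight]
        calm_within_bounded_bilinear[OF bounded_bilinear_outer_product] calm_within_pbasis)
  moreover have "(\<Sum>i\<in>N. c' i *\<^sub>R outer (pbasis (X i - x0))) = (\<Sum>i\<in>N \<inter> N'. c i *\<^sub>R outer (pbasis (X i - x0)))"
    unfolding sum.inter_restrict[OF assms(1)] by (rule sum.cong) (simp_all add: c'_def)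
  ultimately show "calm_within x0 S (mls_M X w \<eta> N) (\<Sum>i\<in>N \<inter> N'. c i *\<^sub>R outer (pbasis (X i - x0)))"
    by simp
  have "calm_within x0 S (mls_b X w \<eta> u N) (\<Sum>i\<in>N. (c' i * u i) *\<^sub>R pbasis (X i - x0))"
    unfolding mls_b_def using assms(1)
    by (intro calm_within_sum calm_within_bounded_bilinear[OF bounded_bilinear_scaleR]
        calm_within_bounded_bilinear[OF bounded_bilinear_mult weight] calm_within_const calm_within_pbasis)
  moreover have "(\<Sum>i\<in>N. (c' i * u i) *\<^sub>R pbasis (X i - x0)) = (\<Sum>i\<in>N \<inter> N'. (c i * u i) *\<^sub>R pbasis (X i - x0))"
    unfolding sum.inter_restrict[OF assms(1)] by (rule sum.cong) (simp_all add: c'_def)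
  ultimately show "calm_within x0 S (mls_b X w \<eta> u N) (\<Sum>i\<in>N \<inter> N'. (c i * u i) *\<^sub>R pbasis (X i - x0))"
    by simp
qed

theorem mainTheorem1:
  fixes X :: "'i \<Rightarrow> real^'d"
    and \<T> :: "'i set set"
    and co cn :: "'i set"
    and F :: "(real^'d) set"
    and xs :: "real^'d"
    and w :: "real^'d \<Rightarrow> real"
    and \<eta> :: "'i \<Rightarrow> real^'d \<Rightarrow> real"
    and u :: "'i \<Rightarrow> real"
  defines "To \<equiv> cell_region X co"
    and "Tn \<equiv> cell_region X cn"
    and "No \<equiv> ring1 \<T> co"
    and "Nn \<equiv> ring1 \<T> cn"
  assumes mesh: "conforming_mesh X \<T>"
    and facet: "common_facet X \<T> co cn F"
    and xs_F: "xs \<in> F"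
    and w_nonneg: "\<forall>y. w y \<ge> 0"
    and w_smooth: "smooth_on UNIV w"
    and w_supp: "compact (closure {y. w y \<noteq> 0})"
    and common_smooth: "\<forall>i \<in> No \<inter> Nn.
          smooth_near_within (To \<union> Tn) xs (\<lambda>x. \<eta> i x * w (X i - x))"
    and diminishing: "\<exists>K>0. \<exists>\<delta>>0.
          (\<forall>i \<in> No - (No \<inter> Nn). \<forall>x \<in> To. norm (x - xs) < \<delta> \<longrightarrow> \<bar>\<eta> i x\<bar> \<le> K * norm (x - xs))
        \<and> (\<forall>i \<in> Nn - (No \<inter> Nn). \<forall>x \<in> Tn. norm (x - xs) < \<delta> \<longrightarrow> \<bar>\<eta> i x\<bar> \<le> K * norm (x - xs))"
    and nondegenerate: "\<exists>\<sigma>>0. \<exists>\<delta>>0.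
          (\<forall>x \<in> To. norm (x - xs) < \<delta> \<longrightarrow> min_singular_value (mls_M X w \<eta> No x) \<ge> \<sigma>)
        \<and> (\<forall>x \<in> Tn. norm (x - xs) < \<delta> \<longrightarrow> min_singular_value (mls_M X w \<eta> Nn x) \<ge> \<sigma>)"
  shows "\<exists>C>0. \<exists>\<delta>>0. \<forall>\<epsilon> xo xn. xo \<in> To \<and> xn \<in> Tn \<and> \<epsilon> < \<delta>
            \<and> norm (xo - xs) \<le> \<epsilon> \<and> norm (xn - xs) \<le> \<epsilon> \<longrightarrow>
            norm (mls_rec X w \<eta> u Nn xn - mls_rec X w \<eta> u No xo) \<le> C * \<epsilon>"
proof -
  have fin: "finite No" "finite Nn"
    using facet finite_ring1[OF mesh] unfolding No_def Nn_def common_facet_def by blast+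
  have "\<exists>c. calm_within xs (To \<union> Tn) (mod_weight X w \<eta> i) c" if "i \<in> No \<inter> Nn" for i
    unfolding mod_weight_def [abs_def]
    by (rule smooth_near_within_imp_calm_within[OF common_smooth[rule_format, OF that]])
  then obtain c where common: "\<forall>i\<in>No \<inter> Nn. calm_within xs (To \<union> Tn) (mod_weight X w \<eta> i) (c i)"
    by (metis bchoice)
  have "No - No \<inter> Nn = No - Nn" "Nn - No \<inter> Nn = Nn - No" by blast+
  with diminishing obtain K \<delta> where "0 < \<delta>"
    "\<forall>i \<in> No - Nn. \<forall>x \<in> To. norm (x - xs) < \<delta> \<longrightarrow> norm (\<eta> i x - 0) \<le> K * norm (x - xs)"
    "\<forall>i \<in> Nn - No. \<forall>x \<in> Tn. norm (x - xs) < \<delta> \<longrightarrow> norm (\<eta> i x - 0) \<le> K * norm (x - xs)"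
    by auto
  then have removed: "\<And>i. i \<in> No - Nn \<Longrightarrow> calm_within xs To (\<eta> i) 0"
    and added: "\<And>i. i \<in> Nn - No \<Longrightarrow> calm_within xs Tn (\<eta> i) 0"
    unfolding calm_within_def eventually_nhds_inf_principal_iff by blast+
  have common_o: "\<And>i. i \<in> No \<inter> Nn \<Longrightarrow> calm_within xs To (mod_weight X w \<eta> i) (c i)"
    and common_n: "\<And>i. i \<in> Nn \<inter> No \<Longrightarrow> calm_within xs Tn (mod_weight X w \<eta> i) (c i)"
    using common calm_within_subset[of xs "To \<union> Tn"] by auto
  note calm_o = calm_within_mls_M_b[where N' = Nn, OF fin(1) common_o calm_within_mod_weight_vanishing[OF w_smooth removed]]
  note calm_n = calm_within_mls_M_b[where N' = No, OF fin(2) common_n calm_within_mod_weight_vanishing[OF w_smooth added],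
      unfolded Int_commute[of Nn No]]
  from nondegenerate obtain \<sigma> where \<sigma>: "0 < \<sigma>"
    "\<forall>\<^sub>F x in nhds xs \<sqinter> principal To. \<sigma> \<le> min_singular_value (mls_M X w \<eta> No x)"
    "\<forall>\<^sub>F x in nhds xs \<sqinter> principal Tn. \<sigma> \<le> min_singular_value (mls_M X w \<eta> Nn x)"
    unfolding eventually_nhds_inf_principal_iff by blast
  show ?thesis
    unfolding mls_rec_def by (rule singular_value_bounded_solutions_jump[OF calm_o calm_n \<sigma>])
qed

end
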